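(* Let $G$ be a bipartite graph with bipartition $A\cup B$ such that every vertex $a\in A$ has degree exactly $2$. Then there exists a subset $X\subseteq B$ with $|X|\le\frac{|A|+|B|}{3}$ such that every vertex of $A$ has a neighbour in $X$. *)

theory Defs
  imports Main
begin

text \<open>A finite simple bipartite graph with parts A and B is represented by its
edge set E, a set of pairs (a,b) with a in A and b in B (each edge ab appears once,
oriented from A to B).\<close>

definition bipartite_graph :: "'v set \<Rightarrow> 'v set \<Rightarrow> ('v \<times> 'v) set \<Rightarrow> bool" where
  "bipartite_graph A B E \<longleftrightarrow> finite A \<and> finite B \<and> A \<inter> B = {} \<and> E \<subseteq> A \<times> B"

definition nbrs :: "('v \<times> 'v) set \<Rightarrow> 'v \<Rightarrow> 'v set" where
  "nbrs E a = {b. (a, b) \<in> E}"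

end

theory Submission
  imports Defs "HOL-Library.Disjoint_Sets"
begin

text \<open>Induction on \<open>|B|\<close>. If some \<open>b \<in> B\<close> meets the neighbourhoods of two distinct
vertices of \<open>A\<close>, put \<open>b\<close> into \<open>X\<close> and recurse on \<open>B - {b}\<close> and the vertices not
adjacent to \<open>b\<close>: the left side grows by 3 and the right side shrinks by at least 3.
Otherwise the neighbourhoods are pairwise disjoint, so \<open>2|A| \<le> |B|\<close>, and one
neighbour per vertex of \<open>A\<close> gives \<open>|X| \<le> |A| \<le> (|A| + |B|)/3\<close>.\<close>

lemma disjoint_family_card_le:
  fixes N :: "'a \<Rightarrow> 'b set"
  assumes "disjoint_family_on N A" "finite A" "finite B"
    and "\<And>a. a \<in> A \<Longrightarrow> N a \<subseteq> B" "\<And>a. a \<in> A \<Longrightarrow> k \<le> card (N a)"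
  shows "k * card A \<le> card B"
proof -
  have "k * card A = (\<Sum>a\<in>A. k)" by simp
  also have "\<dots> \<le> (\<Sum>a\<in>A. card (N a))" using assms(5) by (rule sum_mono)
  also have "\<dots> = card (\<Union>a\<in>A. N a)"
    using assms by (intro card_UN_disjoint'[symmetric]) (auto intro: finite_subset)
  also have "\<dots> \<le> card B" using assms(3,4) by (intro card_mono) auto
  finally show ?thesis .
qed

lemma transversal_card_le:
  fixes N :: "'a \<Rightarrow> 'b set"
  assumes "finite A" "\<And>a. a \<in> A \<Longrightarrow> N a \<noteq> {}"
  shows "\<exists>X \<subseteq> (\<Union>a\<in>A. N a). card X \<le> card A \<and> (\<forall>a\<in>A. N a \<inter> X \<noteq> {})"
proof -
  define f where "f a = (SOME b. b \<in> N a)" for a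
  have f: "f a \<in> N a" if "a \<in> A" for a
    using assms(2)[OF that] unfolding f_def by (simp add: some_in_eq)
  show ?thesis
    using f card_image_le[OF assms(1), of f] by (intro exI[of _ "f ` A"]) auto
qed

lemma transversal_card_bound:
  fixes N :: "'a \<Rightarrow> 'b set"
  assumes "finite A" "finite B"
    and "\<And>a. a \<in> A \<Longrightarrow> N a \<subseteq> B" "\<And>a. a \<in> A \<Longrightarrow> 2 \<le> card (N a)"
  shows "\<exists>X \<subseteq> B. 3 * card X \<le> card A + card B \<and> (\<forall>a\<in>A. N a \<inter> X \<noteq> {})"
  using assms
proof (induction "card B" arbitrary: A B rule: less_induct)
  case less
  show ?case
  proof (cases "disjoint_family_on N A")
    case True
    have "2 * card A \<le> card B"
      using disjoint_family_card_le[OF True] less.prems by blast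
    moreover obtain X where "X \<subseteq> (\<Union>a\<in>A. N a)" "card X \<le> card A" "\<forall>a\<in>A. N a \<inter> X \<noteq> {}"
      using transversal_card_le[of A N] less.prems by fastforce
    ultimately show ?thesis using less.prems(3) by (intro exI[of _ X]) auto
  next
    case False
    then obtain a a' b where a: "a \<in> A" "a' \<in> A" "a \<noteq> a'" and b: "b \<in> N a" "b \<in> N a'"
      unfolding disjoint_family_on_def by blast
    have "b \<in> B" using a(1) b(1) less.prems(3) by blast
    define A' where "A' = {x \<in> A. b \<notin> N x}"
    have "card (B - {b}) < card B"
      using less.prems(2) \<open>b \<in> B\<close> by (rule card_Diff1_less)
    then obtain X' where X': "X' \<subseteq> B - {b}" "3 * card X' \<le> card A' + card (B - {b})"
        "\<forall>x\<in>A'. N x \<inter> X' \<noteq> {}"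
      using less.hyps[of "B - {b}" A'] less.prems unfolding A'_def by auto
    have "A' \<subseteq> A - {a, a'}" using a b unfolding A'_def by auto
    moreover have "card {a, a'} \<le> card A" using a less.prems(1) by (intro card_mono) auto
    ultimately have "card A' + 2 \<le> card A"
      using a less.prems(1) card_mono[of "A - {a, a'}" A'] by auto
    moreover have "card (insert b X') = card X' + 1"
      using X'(1) less.prems(2) by (subst card_insert_disjoint) (auto intro: finite_subset)
    ultimately have "3 * card (insert b X') \<le> card A + card B"
      using X'(2) \<open>b \<in> B\<close> less.prems(2) card_gt_0_iff[of B]
      by (auto simp: card_Diff_singleton)
    moreover have "\<forall>x\<in>A. N x \<inter> insert b X' \<noteq> {}" using X'(3) unfolding A'_def by auto
    ultimately show ?thesis using X'(1) \<open>b \<in> B\<close> by (intro exI[of _ "insert b X'"]) auto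
  qed
qed

theorem lemma3:
  fixes A B :: "'v set" and E :: "('v \<times> 'v) set"
  assumes "bipartite_graph A B E"
    and "\<forall>a\<in>A. card (nbrs E a) = 2"
  shows "\<exists>X. X \<subseteq> B \<and> 3 * card X \<le> card A + card B
              \<and> (\<forall>a\<in>A. nbrs E a \<inter> X \<noteq> {})"
proof -
  have "finite A" "finite B" and "\<And>a. a \<in> A \<Longrightarrow> nbrs E a \<subseteq> B"
    using assms(1) unfolding bipartite_graph_def nbrs_def by auto
  with assms(2) show ?thesis
    using transversal_card_bound[of A B "nbrs E"] by auto
qed

end
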